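(* If $G$ is a regular graph on $d+2$ vertices that is not a complete multipartite graph, then $G$ has a spherical representation in $\mathbb{R}^d$.
   Context: Graphs are finite and simple. A finite set $S\subset\mathbb{R}^d$ is a 2-distance set if $\{\|p-q\| : p,q\in S, p\neq q\}$ has exactly two elements $\alpha_1>\alpha_2$; its associated graph has vertex set $S$ with $p,q$ adjacent iff $\|p-q\|=\alpha_1$. $G$ has a spherical representation in $\mathbb{R}^d$ if some 2-distance set in $\mathbb{R}^d$ lying on a $(d-1)$-dimensional sphere has associated graph $G$. *)

theory Defs
  imports "HOL-Analysis.Analysis" "HOL-Library.Disjoint_Sets"
begin

definition simple_graph :: "'v set \<Rightarrow> ('v \<Rightarrow> 'v \<Rightarrow> bool) \<Rightarrow> bool" where
  "simple_graph V E \<longleftrightarrow> finite V \<and> (\<forall>u v. E u v \<longrightarrow> u \<in> V \<and> v \<in> V)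
     \<and> (\<forall>u v. E u v \<longrightarrow> E v u) \<and> (\<forall>u. \<not> E u u)"

definition degree :: "'v set \<Rightarrow> ('v \<Rightarrow> 'v \<Rightarrow> bool) \<Rightarrow> 'v \<Rightarrow> nat" where
  "degree V E v = card {u \<in> V. E v u}"

definition regular_graph :: "'v set \<Rightarrow> ('v \<Rightarrow> 'v \<Rightarrow> bool) \<Rightarrow> bool" where
  "regular_graph V E \<longleftrightarrow> (\<exists>k. \<forall>v\<in>V. degree V E v = k)"

definition complete_multipartite :: "'v set \<Rightarrow> ('v \<Rightarrow> 'v \<Rightarrow> bool) \<Rightarrow> bool" where
  "complete_multipartite V E \<longleftrightarrow> (\<exists>P. partition_on V P \<and>
     (\<forall>u\<in>V. \<forall>v\<in>V. E u v \<longleftrightarrow> \<not> (\<exists>A\<in>P. u \<in> A \<and> v \<in> A)))"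

definition distances :: "'a::metric_space set \<Rightarrow> real set" where
  "distances S = {dist p q | p q. p \<in> S \<and> q \<in> S \<and> p \<noteq> q}"

definition two_distance_set :: "'a::metric_space set \<Rightarrow> bool" where
  "two_distance_set S \<longleftrightarrow> finite S \<and> card (distances S) = 2"

definition assoc_adj :: "'a::metric_space set \<Rightarrow> 'a \<Rightarrow> 'a \<Rightarrow> bool" where
  "assoc_adj S p q \<longleftrightarrow> p \<in> S \<and> q \<in> S \<and> p \<noteq> q \<and> dist p q = Max (distances S)"

definition on_sphere :: "'a::euclidean_space set \<Rightarrow> bool" where
  "on_sphere S \<longleftrightarrow> (\<exists>c r. r > 0 \<and> S \<subseteq> sphere c r)"

definition spherical_rep :: "'v set \<Rightarrow> ('v \<Rightarrow> 'v \<Rightarrow> bool) \<Rightarrow> ('v \<Rightarrow> 'a::euclidean_space) \<Rightarrow> bool" where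
  "spherical_rep V E f \<longleftrightarrow> inj_on f V \<and> two_distance_set (f ` V) \<and> on_sphere (f ` V) \<and>
     (\<forall>u\<in>V. \<forall>v\<in>V. E u v \<longleftrightarrow> assoc_adj (f ` V) (f u) (f v))"

end

theory Submission
  imports Defs "HOL-Library.Cardinality"
begin

(* Let A be the adjacency matrix of the k-regular graph on n = d + 2 vertices and let \<alpha> be the
   maximum of x \<bullet> A x over unit vectors x orthogonal to the all-ones vector 1, attained at x0.
   An induced K2 + K1 (an edge uw and a vertex v adjacent to neither), which exists as soon as the
   graph is not complete multipartite, makes \<alpha> positive.  For \<gamma> = (k - \<alpha>) / n the matrix
   \<alpha>I - A + \<gamma>J is positive semidefinite and annihilates both 1 and x0, so it is the Gram matrix
   of n vectors spanning at most n - 2 = d dimensions.  These vectors have common norm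
   sqrt (\<alpha> + \<gamma>) and mutual distances sqrt (2\<alpha> + 2) along edges and sqrt (2\<alpha>) along non-edges. *)

definition quad_form :: "'a set \<Rightarrow> ('a \<Rightarrow> 'a \<Rightarrow> real) \<Rightarrow> ('a \<Rightarrow> real) \<Rightarrow> real" where
  "quad_form I G c = (\<Sum>j\<in>I. \<Sum>l\<in>I. c j * c l * G j l)"

definition psd_on :: "'a set \<Rightarrow> ('a \<Rightarrow> 'a \<Rightarrow> real) \<Rightarrow> bool" where
  "psd_on I G \<longleftrightarrow> (\<forall>c. 0 \<le> quad_form I G c)"

definition symmetric_on :: "'a set \<Rightarrow> ('a \<Rightarrow> 'a \<Rightarrow> real) \<Rightarrow> bool" where
  "symmetric_on I G \<longleftrightarrow> (\<forall>j\<in>I. \<forall>l\<in>I. G j l = G l j)"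

lemma quad_form_insert:
  assumes "finite I" "i \<notin> I"
  shows "quad_form (insert i I) G c =
    c i * c i * G i i + (\<Sum>l\<in>I. c i * c l * G i l) + (\<Sum>j\<in>I. c j * c i * G j i) + quad_form I G c"
  using assms by (simp add: quad_form_def sum.distrib algebra_simps)

lemma quad_form_mono_neutral:
  assumes "finite I" "J \<subseteq> I" "\<And>j. j \<in> I - J \<Longrightarrow> c j = 0"
  shows "quad_form I G c = quad_form J G c"
  unfolding quad_form_def using assms
  by (intro sum.mono_neutral_cong_right ballI sum.mono_neutral_cong_right) auto

lemma psd_on_diag_nonneg:
  assumes "finite I" "psd_on I G" "i \<in> I"
  shows "0 \<le> G i i"
proof -
  define c where "c = (\<lambda>k. if k = i then 1 else (0::real))"
  have "0 \<le> quad_form I G c" using assms(2) by (simp add: psd_on_def)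
  also have "\<dots> = quad_form {i} G c"
    using assms by (intro quad_form_mono_neutral) (auto simp: c_def)
  also have "\<dots> = G i i" by (simp add: quad_form_def c_def)
  finally show ?thesis .
qed

lemma psd_on_diag_zero_imp_row_zero:
  assumes "finite I" "psd_on I G" "symmetric_on I G" "i \<in> I" "j \<in> I" "G i i = 0"
  shows "G i j = 0"
proof (rule ccontr)
  assume nz: "G i j \<noteq> 0"
  then have "i \<noteq> j" using assms(6) by auto
  define t where "t = - (G j j + 1) / (2 * G i j)"
  define c where "c = (\<lambda>k. if k = i then t else if k = j then 1 else (0::real))"
  have "0 \<le> quad_form I G c" using assms(2) by (simp add: psd_on_def)
  also have "\<dots> = quad_form {i, j} G c"
    using assms by (intro quad_form_mono_neutral) (auto simp: c_def)
  also have "\<dots> = 2 * t * G i j + G j j"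
    using \<open>i \<noteq> j\<close> assms(3-6) by (simp add: quad_form_def c_def symmetric_on_def)
  also have "\<dots> = -1" using nz by (simp add: t_def field_simps)
  finally show False by simp
qed

lemma psd_on_subset:
  assumes "finite I" "psd_on I G" "J \<subseteq> I"
  shows "psd_on J G"
  unfolding psd_on_def
proof
  fix c :: "_ \<Rightarrow> real"
  have "quad_form J G c = quad_form I G (\<lambda>k. if k \<in> J then c k else 0)"
    using assms by (subst quad_form_mono_neutral[where J = J]) (auto simp: quad_form_def intro!: sum.cong)
  then show "0 \<le> quad_form J G c" using assms(2) by (simp add: psd_on_def)
qed

lemma psd_on_Schur_complement:
  assumes "finite I" "i \<notin> I" "psd_on (insert i I) G" "symmetric_on (insert i I) G"
  shows "psd_on I (\<lambda>j l. G j l - G i j * G i l / G i i)"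
proof (cases "G i i = 0")
  case True
  then show ?thesis using psd_on_subset[OF _ assms(3)] assms(1) by auto
next
  case False
  show ?thesis
    unfolding psd_on_def
  proof
    fix c :: "_ \<Rightarrow> real"
    define s where "s = (\<Sum>j\<in>I. c j * G i j)"
    define x where "x = c(i := - s / G i i)"
    have sym: "G j i = G i j" if "j \<in> I" for j
      using assms(4) that unfolding symmetric_on_def by blast
    have "0 \<le> quad_form (insert i I) G x" using assms(3) by (simp add: psd_on_def)
    also have "\<dots> = x i * x i * G i i + 2 * x i * s + quad_form I G c"
    proof -
      have xI: "x j = c j" if "j \<in> I" for j
        using assms(2) that by (auto simp: x_def)
      have "(\<Sum>l\<in>I. x i * x l * G i l) = x i * s" "(\<Sum>j\<in>I. x j * x i * G j i) = x i * s"
        unfolding s_def sum_distrib_left by (simp_all add: xI sym mult_ac cong: sum.cong)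
      moreover have "quad_form I G x = quad_form I G c"
        by (simp add: quad_form_def xI cong: sum.cong)
      ultimately show ?thesis using assms(1,2) by (simp add: quad_form_insert)
    qed
    also have "\<dots> = quad_form I G c - s * s / G i i"
      using False by (simp add: x_def field_simps)
    also have "\<dots> = quad_form I (\<lambda>j l. G j l - G i j * G i l / G i i) c"
      by (simp add: quad_form_def s_def algebra_simps sum_subtractf sum_divide_distrib sum_product)
    finally show "0 \<le> quad_form I (\<lambda>j l. G j l - G i j * G i l / G i i) c" .
  qed
qed

lemma Gram_factorization_insert:
  assumes "finite I" "i \<notin> I" "psd_on (insert i I) G" "symmetric_on (insert i I) G"
    and f': "\<And>j l. j \<in> I \<Longrightarrow> l \<in> I \<Longrightarrow> (\<Sum>k\<in>I. f' j k * f' l k) = G j l - G i j * G i l / G i i"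
    and "j \<in> insert i I" "l \<in> insert i I"
  \<comment> \<open>one step of Cholesky factorisation\<close>
  defines "f \<equiv> \<lambda>j. (if j = i then (\<lambda>_. 0) else f' j)(i := G i j / sqrt (G i i))"
  shows "(\<Sum>k\<in>insert i I. f j k * f l k) = G j l"
proof -
  have sym: "G j' l' = G l' j'" if "j' \<in> insert i I" "l' \<in> insert i I" for j' l'
    using assms(4) that unfolding symmetric_on_def by blast
  have "0 \<le> G i i"
    using assms(1,3) by (intro psd_on_diag_nonneg) auto
  then have "(\<Sum>k\<in>insert i I. f j k * f l k) = G i j * G i l / G i i + (\<Sum>k\<in>I. f j k * f l k)"
    using assms(1,2) by (simp add: f_def)
  also have "\<dots> = G j l"
  proof (cases "j = i \<or> l = i")
    case True
    have "G i j * G i l / G i i = G j l"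
    proof (cases "G i i = 0")
      case True
      then have "G i j = 0" "G i l = 0"
        using assms(1-7) psd_on_diag_zero_imp_row_zero[of "insert i I" G i] by simp_all
      with \<open>j = i \<or> l = i\<close> sym[of i j] assms(6) show ?thesis by auto
    next
      case False
      with \<open>j = i \<or> l = i\<close> sym[of i j] assms(6) show ?thesis by auto
    qed
    moreover have "(\<Sum>k\<in>I. f j k * f l k) = 0"
      using True assms(2) by (auto simp: f_def intro!: sum.neutral)
    ultimately show ?thesis by simp
  next
    case False
    then have "(\<Sum>k\<in>I. f j k * f l k) = G j l - G i j * G i l / G i i"
      using assms(2,6,7) by (auto simp: f_def intro!: trans[OF sum.cong f'])
    then show ?thesis by simp
  qed
  finally show ?thesis .
qed

lemma psd_on_Gram_factorization:
  assumes "finite I" "psd_on I G" "symmetric_on I G"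
  shows "\<exists>f. \<forall>j\<in>I. \<forall>l\<in>I. (\<Sum>k\<in>I. f j k * f l k) = G j l"
  using assms
proof (induction I arbitrary: G rule: finite_induct)
  case empty
  then show ?case by simp
next
  case (insert i I)
  define G' where "G' = (\<lambda>j l. G j l - G i j * G i l / G i i)"
  have "psd_on I G'"
    unfolding G'_def using insert by (intro psd_on_Schur_complement)
  moreover have "symmetric_on I G'"
    unfolding symmetric_on_def
  proof (intro ballI)
    fix j l assume "j \<in> I" "l \<in> I"
    then have "G j l = G l j"
      using insert.prems(2) unfolding symmetric_on_def by blast
    then show "G' j l = G' l j" by (simp add: G'_def mult.commute)
  qed
  ultimately obtain f' where f': "\<And>j l. j \<in> I \<Longrightarrow> l \<in> I \<Longrightarrow> (\<Sum>k\<in>I. f' j k * f' l k) = G' j l"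
    using insert.IH by blast
  define f where "f = (\<lambda>j. (if j = i then (\<lambda>_. 0) else f' j)(i := G i j / sqrt (G i i)))"
  have "(\<Sum>k\<in>insert i I. f j k * f l k) = G j l" if "j \<in> insert i I" "l \<in> insert i I" for j l
    unfolding f_def using f' unfolding G'_def by (rule Gram_factorization_insert[OF insert.hyps insert.prems _ that])
  then show ?case by blast
qed

lemma quadratic_form_max_on_subspace:
  fixes A :: "real^'n^'n" and S :: "(real^'n) set"
  assumes "subspace S" "z \<in> S" "z \<noteq> 0"
  obtains x where "x \<in> S" "norm x = 1"
    "\<And>y. y \<in> S \<Longrightarrow> y \<bullet> (A *v y) \<le> (x \<bullet> (A *v x)) * (norm y)\<^sup>2"
proof -
  define Q where "Q y = y \<bullet> (A *v y)" for y
  have Q_scale: "Q (c *\<^sub>R y) = c\<^sup>2 * Q y" for c y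
    by (simp add: Q_def matrix_vector_mult_scaleR power2_eq_square)
  have "compact (S \<inter> sphere 0 1)"
    using assms(1) by (metis closed_subspace compact_Int_closed compact_sphere Int_commute)
  moreover have "z /\<^sub>R norm z \<in> S \<inter> sphere 0 1"
    using assms by (simp add: subspace_scale)
  moreover have "continuous_on (S \<inter> sphere 0 1) Q"
    unfolding Q_def by (intro continuous_intros linear_continuous_on bounded_linear_intros)
  ultimately obtain x where x: "x \<in> S \<inter> sphere 0 1" and x_max: "\<And>y. y \<in> S \<inter> sphere 0 1 \<Longrightarrow> Q y \<le> Q x"
    using continuous_attains_sup[of "S \<inter> sphere 0 1" Q] by blast
  have "Q y \<le> Q x * (norm y)\<^sup>2" if "y \<in> S" for y
  proof (cases "y = 0")
    case True
    then show ?thesis by (simp add: Q_def)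
  next
    case False
    then have "Q (y /\<^sub>R norm y) \<le> Q x"
      using that assms(1) by (intro x_max) (simp add: subspace_scale)
    moreover have "Q y = (norm y)\<^sup>2 * Q (y /\<^sub>R norm y)"
      using False by (simp add: Q_scale power2_eq_square field_simps)
    ultimately show ?thesis
      by (metis mult.commute mult_left_mono zero_le_power2)
  qed
  with x that show ?thesis by (auto simp: Q_def)
qed

lemma inner_matrix_vector_commute:
  fixes A :: "real^'n^'n"
  assumes "transpose A = A"
  shows "x \<bullet> (A *v y) = y \<bullet> (A *v x)"
  by (metis assms dot_lmul_matrix inner_commute vector_transpose_matrix)

lemma quadratic_form_shift_nonneg:
  fixes A :: "real^'n^'n"
  assumes sym: "transpose A = A" and eigen: "A *v 1 = k *\<^sub>R 1"
    and bound: "\<And>y. y \<bullet> 1 = 0 \<Longrightarrow> y \<bullet> (A *v y) \<le> \<alpha> * (norm y)\<^sup>2"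
  shows "0 \<le> \<alpha> * (x \<bullet> x) - x \<bullet> (A *v x) + (k - \<alpha>) / CARD('n) * (x \<bullet> 1)\<^sup>2"
proof -
  define n where "n = real CARD('n)"
  have "n > 0" by (simp add: n_def)
  have ones: "(1::real^'n) \<bullet> 1 = n" by (simp add: inner_vec_def n_def)
  define t where "t = (x \<bullet> 1) / n"
  define z where "z = x - t *\<^sub>R 1"
  have z_perp: "z \<bullet> 1 = 0" using \<open>n > 0\<close> by (simp add: z_def t_def inner_diff_left ones)
  have x_eq: "x = z + t *\<^sub>R 1" by (simp add: z_def)
  have "1 \<bullet> (A *v z) = 0"
    using inner_matrix_vector_commute[OF sym, of 1 z] by (simp add: eigen z_perp)
  then have "x \<bullet> (A *v x) = z \<bullet> (A *v z) + t\<^sup>2 * k * n"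
    unfolding x_eq by (simp add: inner_add_left inner_add_right algebra_simps eigen z_perp ones
      inner_commute[of 1 z] power2_eq_square)
  moreover have "x \<bullet> x = z \<bullet> z + t\<^sup>2 * n"
    unfolding x_eq by (simp add: inner_add_left inner_add_right z_perp inner_commute[of 1 z] ones
      power2_eq_square)
  moreover have "x \<bullet> 1 = t * n" using \<open>n > 0\<close> by (simp add: t_def)
  moreover have "z \<bullet> (A *v z) \<le> \<alpha> * (z \<bullet> z)"
    using bound[OF z_perp] by (simp add: power2_norm_eq_inner)
  ultimately show ?thesis
    using \<open>n > 0\<close> by (simp add: n_def[symmetric] power2_eq_square field_simps)
qed

definition adjacency_matrix :: "('n::finite \<Rightarrow> 'n \<Rightarrow> bool) \<Rightarrow> real^'n^'n" where
  "adjacency_matrix E = (\<chi> i j. if E i j then 1 else 0)"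

definition graph_kernel :: "('n \<Rightarrow> 'n \<Rightarrow> bool) \<Rightarrow> real \<Rightarrow> real \<Rightarrow> 'n \<Rightarrow> 'n \<Rightarrow> real" where
  "graph_kernel E \<alpha> \<gamma> i j = (if i = j then \<alpha> else 0) - (if E i j then 1 else 0) + \<gamma>"

lemma transpose_adjacency_matrix:
  assumes "\<And>i j. E i j \<Longrightarrow> E j i"
  shows "transpose (adjacency_matrix E) = adjacency_matrix E"
  using assms by (auto simp: vec_eq_iff transpose_def adjacency_matrix_def)

lemma adjacency_matrix_mult_ones:
  assumes "\<And>i. card {j. E i j} = k"
  shows "adjacency_matrix E *v 1 = real k *\<^sub>R 1"
  using assms by (simp add: vec_eq_iff matrix_vector_mult_def adjacency_matrix_def sum.If_cases)

lemma adjacency_quadratic_form_K2_plus_K1: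
  assumes "\<And>i. \<not> E i i" "\<And>i j. E i j \<Longrightarrow> E j i"
    and "E u w" "\<not> E u v" "\<not> E v w" "u \<noteq> v" "v \<noteq> w"
  defines "y \<equiv> axis u 1 + axis w 1 - 2 *\<^sub>R axis v (1::real)"
  shows "y \<bullet> 1 = 0" "y \<noteq> 0" "y \<bullet> (adjacency_matrix E *v y) = 2"
proof -
  have "u \<noteq> w" "\<not> E v u" "\<not> E w v" using assms(1-5) by blast+
  show "y \<bullet> 1 = 0" by (simp add: y_def inner_add_left inner_diff_left inner_axis')
  have "y $ u = 1" using \<open>u \<noteq> w\<close> \<open>u \<noteq> v\<close> by (simp add: y_def axis_def)
  then show "y \<noteq> 0" by auto
  show "y \<bullet> (adjacency_matrix E *v y) = 2"
    using assms(1-5) \<open>u \<noteq> w\<close> \<open>\<not> E v u\<close> \<open>\<not> E w v\<close>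
    by (simp add: y_def algebra_simps matrix_vector_mult_basis inner_add_left inner_diff_left
        inner_axis' column_def adjacency_matrix_def)
qed

lemma quad_form_graph_kernel:
  fixes E :: "'n::finite \<Rightarrow> 'n \<Rightarrow> bool"
  shows "quad_form UNIV (graph_kernel E \<alpha> \<gamma>) (($) x)
    = \<alpha> * (x \<bullet> x) - x \<bullet> (adjacency_matrix E *v x) + \<gamma> * (x \<bullet> 1)\<^sup>2"
proof -
  have "(\<Sum>i\<in>UNIV. \<Sum>j\<in>UNIV. x $ i * x $ j * (if i = j then \<alpha> else 0)) = \<alpha> * (x \<bullet> x)"
    by (simp add: inner_vec_def sum_distrib_left if_distrib mult_ac cong: if_cong)
  moreover have "(\<Sum>i\<in>UNIV. \<Sum>j\<in>UNIV. x $ i * x $ j * (if E i j then 1 else 0))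
      = x \<bullet> (adjacency_matrix E *v x)"
    by (simp add: inner_vec_def matrix_vector_mult_def adjacency_matrix_def sum_distrib_left mult_ac)
  moreover have "(\<Sum>i\<in>UNIV. \<Sum>j\<in>UNIV. x $ i * x $ j * \<gamma>) = \<gamma> * (x \<bullet> 1)\<^sup>2"
    by (simp add: inner_vec_def power2_eq_square sum_product sum_distrib_left mult_ac)
  ultimately show ?thesis
    by (simp add: quad_form_def graph_kernel_def algebra_simps sum.distrib sum_subtractf)
qed

lemma norm_sum_Gram_vectors:
  fixes F :: "'i \<Rightarrow> 'a::real_inner"
  assumes "\<And>i j. i \<in> I \<Longrightarrow> j \<in> I \<Longrightarrow> F i \<bullet> F j = G i j"
  shows "(norm (\<Sum>i\<in>I. c i *\<^sub>R F i))\<^sup>2 = quad_form I G c"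
  unfolding power2_norm_eq_inner inner_sum_left unfolding inner_sum_right quad_form_def
  by (intro sum.cong refl) (simp add: assms)

lemma range_subset_span_remove_two:
  fixes F :: "'n::finite \<Rightarrow> 'a::real_vector" and c :: "'n \<Rightarrow> real"
  assumes sum_F: "(\<Sum>i\<in>UNIV. F i) = 0" and sum_cF: "(\<Sum>i\<in>UNIV. c i *\<^sub>R F i) = 0"
    and "c a \<noteq> c b"
  shows "range F \<subseteq> span (F ` (UNIV - {a, b}))"
proof -
  define D where "D = UNIV - {a, b}"
  have UNIV_eq: "UNIV = insert a (insert b D)" and "a \<notin> insert b D" "b \<notin> D"
    using \<open>c a \<noteq> c b\<close> by (auto simp: D_def)
  have F_D: "F i \<in> span (F ` D)" if "i \<in> D" for i
    using that by (simp add: span_base)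
  have "(\<Sum>i\<in>UNIV. (c i - c a) *\<^sub>R F i) = 0"
    using sum_F sum_cF by (simp add: scaleR_left_diff_distrib sum_subtractf scaleR_sum_right[symmetric])
  then have "(c b - c a) *\<^sub>R F b = - (\<Sum>i\<in>D. (c i - c a) *\<^sub>R F i)"
    using \<open>a \<notin> insert b D\<close> \<open>b \<notin> D\<close> by (simp add: UNIV_eq eq_neg_iff_add_eq_0)
  moreover have "- (\<Sum>i\<in>D. (c i - c a) *\<^sub>R F i) \<in> span (F ` D)"
    by (intro span_neg span_sum span_scale F_D)
  ultimately have "(c b - c a) *\<^sub>R F b \<in> span (F ` D)"
    by simp
  then have "(1 / (c b - c a)) *\<^sub>R ((c b - c a) *\<^sub>R F b) \<in> span (F ` D)"
    by (rule span_scale)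
  then have F_b: "F b \<in> span (F ` D)"
    using \<open>c a \<noteq> c b\<close> by simp
  have "F a = - F b - (\<Sum>i\<in>D. F i)"
    using sum_F \<open>a \<notin> insert b D\<close> \<open>b \<notin> D\<close>
    by (simp add: UNIV_eq algebra_simps eq_neg_iff_add_eq_0[symmetric])
  moreover have "- F b - (\<Sum>i\<in>D. F i) \<in> span (F ` D)"
    by (intro span_diff span_neg span_sum F_b F_D)
  ultimately have "F a \<in> span (F ` D)"
    by simp
  with F_b F_D show ?thesis
    unfolding D_def by blast
qed

lemma dim_range_le_CARD_minus_2:
  fixes F :: "'n::finite \<Rightarrow> 'a::real_vector" and c :: "'n \<Rightarrow> real"
  assumes "(\<Sum>i\<in>UNIV. F i) = 0" "(\<Sum>i\<in>UNIV. c i *\<^sub>R F i) = 0" "c a \<noteq> c b"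
  shows "dim (range F) \<le> CARD('n) - 2"
proof -
  have "dim (range F) \<le> card (F ` (UNIV - {a, b}))"
    using range_subset_span_remove_two[OF assms] by (rule dim_le_card) simp
  also have "\<dots> \<le> card (UNIV - {a, b})"
    by (rule card_image_le) simp
  also have "\<dots> = CARD('n) - 2"
    using \<open>c a \<noteq> c b\<close> by (cases "a = b") (simp_all add: card_Diff_subset)
  finally show ?thesis .
qed

lemma exists_isometry_on_span:
  fixes S :: "'a::euclidean_space set"
  assumes "dim S \<le> DIM('b)"
  obtains g :: "'a \<Rightarrow> 'b::euclidean_space" where "linear g" "\<And>x. x \<in> span S \<Longrightarrow> norm (g x) = norm x"
proof -
  have "dim (span S) \<le> dim (UNIV :: 'b set)"
    using assms by simp
  then obtain T :: "'b set" where "subspace T" "dim T = dim (span S)"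
    by (rule choose_subspace_of_subspace)
  then obtain g :: "'a \<Rightarrow> 'b" where "linear g" "\<And>x. x \<in> span S \<Longrightarrow> norm (g x) = norm x"
    by (metis isometry_subspaces subspace_span)
  then show ?thesis by (rule that)
qed

lemma spherical_rep_of_two_distances:
  fixes p :: "'v \<Rightarrow> 'a::euclidean_space"
  assumes "finite V" and irrefl: "\<And>i. i \<in> V \<Longrightarrow> \<not> E i i"
    and norm_p: "\<And>i. i \<in> V \<Longrightarrow> norm (p i) = r"
    and dist_p: "\<And>i j. i \<in> V \<Longrightarrow> j \<in> V \<Longrightarrow> i \<noteq> j \<Longrightarrow> dist (p i) (p j) = (if E i j then a else b)"
    and "0 < b" "b < a"
    and vertices: "u \<in> V" "v \<in> V" "w \<in> V" and "E u w" "u \<noteq> v" "\<not> E u v"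
  shows "spherical_rep V E p"
proof -
  have p_eq_iff: "p i = p j \<longleftrightarrow> i = j" if "i \<in> V" "j \<in> V" for i j
    using dist_p[OF that] \<open>0 < b\<close> \<open>b < a\<close> by (cases "i = j") (auto split: if_splits)
  have "u \<noteq> w" using irrefl \<open>u \<in> V\<close> \<open>E u w\<close> by blast
  have distances: "distances (p ` V) = {a, b}"
  proof
    show "distances (p ` V) \<subseteq> {a, b}"
      using dist_p p_eq_iff by (auto simp: distances_def)
    have "a = dist (p u) (p w)" "b = dist (p u) (p v)"
      using dist_p \<open>u \<noteq> w\<close> \<open>u \<noteq> v\<close> vertices \<open>E u w\<close> \<open>\<not> E u v\<close> by auto
    then show "{a, b} \<subseteq> distances (p ` V)"
      unfolding distances_def using p_eq_iff \<open>u \<noteq> w\<close> \<open>u \<noteq> v\<close> vertices by blast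
  qed
  have "0 < r"
    using norm_p[of u] norm_p[of v] p_eq_iff[of u v] vertices \<open>u \<noteq> v\<close> by (auto simp: order_le_less)
  have max: "Max (distances (p ` V)) = a"
    using \<open>b < a\<close> by (simp add: distances)
  show ?thesis
    unfolding spherical_rep_def
  proof (intro conjI ballI)
    show "inj_on p V" using p_eq_iff by (auto intro: inj_onI)
    show "two_distance_set (p ` V)"
      using \<open>finite V\<close> \<open>b < a\<close> by (simp add: two_distance_set_def distances)
    show "on_sphere (p ` V)"
      unfolding on_sphere_def using \<open>0 < r\<close> norm_p by (intro exI[of _ 0] exI[of _ r]) auto
    show "E i j \<longleftrightarrow> assoc_adj (p ` V) (p i) (p j)" if "i \<in> V" "j \<in> V" for i j
      using that irrefl dist_p[OF that] p_eq_iff[OF that] \<open>b < a\<close>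
      by (auto simp: assoc_adj_def max split: if_splits)
  qed
qed

lemma spherical_rep_relabel:
  assumes "bij_betw \<beta> W V" "spherical_rep W (\<lambda>i j. E (\<beta> i) (\<beta> j)) p"
  shows "spherical_rep V E (p \<circ> inv_into W \<beta>)"
proof -
  define \<iota> where "\<iota> = inv_into W \<beta>"
  have \<iota>: "bij_betw \<iota> V W" and \<beta>_\<iota>: "\<And>x. x \<in> V \<Longrightarrow> \<beta> (\<iota> x) = x"
    using assms(1) by (auto simp: \<iota>_def bij_betw_inv_into bij_betw_inv_into_right)
  have image: "(p \<circ> \<iota>) ` V = p ` W"
    using \<iota> by (metis bij_betw_imp_surj_on image_comp)
  show ?thesis
    using assms(2) \<iota> \<beta>_\<iota> unfolding spherical_rep_def \<iota>_def[symmetric] image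
    by (auto simp: bij_betw_def comp_inj_on bij_betwE)
qed

lemma degree_relabel:
  assumes "bij_betw \<beta> W V" "i \<in> W"
  shows "degree W (\<lambda>i j. E (\<beta> i) (\<beta> j)) i = degree V E (\<beta> i)"
proof -
  have "\<beta> ` W = V"
    using assms(1) by (rule bij_betw_imp_surj_on)
  then have "\<beta> ` {j \<in> W. E (\<beta> i) (\<beta> j)} = {x \<in> V. E (\<beta> i) x}"
    by blast
  then have "bij_betw \<beta> {j \<in> W. E (\<beta> i) (\<beta> j)} {x \<in> V. E (\<beta> i) x}"
    using assms(1) by (rule bij_betw_subset[rotated 2]) auto
  then show ?thesis
    unfolding degree_def by (rule bij_betw_same_card)
qed

lemma not_complete_multipartite_obtains_K2_plus_K1:
  assumes "simple_graph V E" "\<not> complete_multipartite V E"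
  obtains u v w where "u \<in> V" "v \<in> V" "w \<in> V" "E u w" "\<not> E u v" "\<not> E v w" "u \<noteq> v" "v \<noteq> w"
proof -
  have irrefl: "\<And>x. \<not> E x x" and sym: "\<And>x y. E x y \<Longrightarrow> E y x"
    using assms(1) by (auto simp: simple_graph_def)
  have "\<exists>u v w. u \<in> V \<and> v \<in> V \<and> w \<in> V \<and> E u w \<and> \<not> E u v \<and> \<not> E v w \<and> u \<noteq> v \<and> v \<noteq> w"
  proof (rule ccontr)
    assume no_K2_plus_K1: "\<not> ?thesis"
    \<comment> \<open>without an induced K2 + K1, non-adjacency is an equivalence relation and its classes are the parts\<close>
    define r where "r = {(x, y). x \<in> V \<and> y \<in> V \<and> \<not> E x y}"
    have equiv: "equiv V r"
    proof (rule equivI)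
      show "refl_on V r" by (auto simp: refl_on_def r_def irrefl)
      show "r \<subseteq> V \<times> V" by (auto simp: r_def)
      show "Relation.sym r" by (auto simp: Relation.sym_def r_def dest: sym)
      show "trans r"
      proof (rule transI)
        fix x y z assume "(x, y) \<in> r" "(y, z) \<in> r"
        then show "(x, z) \<in> r" using no_K2_plus_K1 by (auto simp: r_def)
      qed
    qed
    have same_part: "(\<exists>A\<in>V // r. x \<in> A \<and> y \<in> A) \<longleftrightarrow> \<not> E x y" if "x \<in> V" "y \<in> V" for x y
    proof
      assume "\<exists>A\<in>V // r. x \<in> A \<and> y \<in> A"
      then obtain A where "A \<in> V // r" "x \<in> A" "y \<in> A" by blast
      then have "(x, y) \<in> r" using in_quotient_imp_in_rel[OF equiv] by blast
      then show "\<not> E x y" by (simp add: r_def)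
    next
      assume "\<not> E x y"
      then have "x \<in> r `` {x} \<and> y \<in> r `` {x}" using that irrefl by (auto simp: r_def)
      moreover have "r `` {x} \<in> V // r" using that(1) by (rule quotientI)
      ultimately show "\<exists>A\<in>V // r. x \<in> A \<and> y \<in> A" by blast
    qed
    have "complete_multipartite V E"
      unfolding complete_multipartite_def using partition_on_quotient[OF equiv] same_part by blast
    with assms(2) show False ..
  qed
  with that show ?thesis by blast
qed

lemma exists_distinct_coordinates:
  fixes x :: "real^'n"
  assumes "x \<bullet> 1 = 0" "x \<noteq> 0"
  obtains a b where "x $ a \<noteq> x $ b"
proof (rule ccontr)
  assume "\<not> thesis"
  then have const: "x = (x $ a) *\<^sub>R 1" for a
    using that by (auto simp: vec_eq_iff)
  obtain a where "x $ a \<noteq> 0"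
    using assms(2) by (auto simp: vec_eq_iff)
  moreover have "x \<bullet> 1 = x $ a * CARD('n)"
    by (subst const[of a]) (simp add: inner_vec_def)
  ultimately show False
    using assms(1) by simp
qed

lemma adjacency_max_on_ones_orthogonal:
  fixes E :: "'n::finite \<Rightarrow> 'n \<Rightarrow> bool"
  assumes irrefl: "\<And>i. \<not> E i i" and sym: "\<And>i j. E i j \<Longrightarrow> E j i"
    and K2_plus_K1: "E u w" "\<not> E u v" "\<not> E v w" "u \<noteq> v" "v \<noteq> w"
  obtains x where "x \<bullet> 1 = 0" "norm x = 1" "0 < x \<bullet> (adjacency_matrix E *v x)"
    "\<And>z. z \<bullet> 1 = 0 \<Longrightarrow> z \<bullet> (adjacency_matrix E *v z) \<le> (x \<bullet> (adjacency_matrix E *v x)) * (norm z)\<^sup>2"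
proof -
  define A where "A = adjacency_matrix E"
  define y where "y = axis u 1 + axis w 1 - 2 *\<^sub>R axis v (1::real)"
  have y: "y \<bullet> 1 = 0" "y \<noteq> 0" "y \<bullet> (A *v y) = 2"
    unfolding y_def A_def using adjacency_quadratic_form_K2_plus_K1[OF irrefl sym K2_plus_K1] by auto
  have "y \<in> {z. 1 \<bullet> z = 0}" using y(1) by (simp add: inner_commute)
  then obtain x where x: "x \<in> {z. 1 \<bullet> z = 0}" "norm x = 1"
    and x_max: "\<And>z. z \<in> {z. 1 \<bullet> z = 0} \<Longrightarrow> z \<bullet> (A *v z) \<le> (x \<bullet> (A *v x)) * (norm z)\<^sup>2"
    using quadratic_form_max_on_subspace[OF subspace_hyperplane _ y(2)] by blast
  have "2 \<le> (x \<bullet> (A *v x)) * (norm y)\<^sup>2"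
    using x_max[of y] y(1,3) by (simp add: inner_commute)
  then have "0 < (x \<bullet> (A *v x)) * (norm y)\<^sup>2"
    by linarith
  then have "0 < x \<bullet> (A *v x)"
    using y(2) by (simp add: zero_less_mult_iff)
  with x x_max show ?thesis
    using that unfolding A_def by (simp add: inner_commute)
qed

lemma psd_on_regular_graph_kernel:
  fixes E :: "'n::finite \<Rightarrow> 'n \<Rightarrow> bool"
  assumes sym: "\<And>i j. E i j \<Longrightarrow> E j i" and regular: "\<And>i. card {j. E i j} = k"
    and bound: "\<And>z. z \<bullet> 1 = 0 \<Longrightarrow> z \<bullet> (adjacency_matrix E *v z) \<le> \<alpha> * (norm z)\<^sup>2"
  shows "psd_on UNIV (graph_kernel E \<alpha> ((k - \<alpha>) / CARD('n)))"
  unfolding psd_on_def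
proof
  fix c :: "'n \<Rightarrow> real"
  have "0 \<le> quad_form UNIV (graph_kernel E \<alpha> ((k - \<alpha>) / CARD('n))) (($) (\<chi> i. c i))"
    unfolding quad_form_graph_kernel
    by (rule quadratic_form_shift_nonneg[OF transpose_adjacency_matrix[OF sym]
          adjacency_matrix_mult_ones[OF regular] bound])
  moreover have "($) (\<chi> i. c i) = c" by (simp add: fun_eq_iff)
  ultimately show "0 \<le> quad_form UNIV (graph_kernel E \<alpha> ((k - \<alpha>) / CARD('n))) c"
    by simp
qed

lemma exists_Gram_vectors:
  assumes "psd_on UNIV G" "symmetric_on UNIV G"
  obtains F :: "'n::finite \<Rightarrow> real^'n" where "\<And>i j. F i \<bullet> F j = G i j"
proof -
  obtain f where f: "\<And>i j. (\<Sum>l\<in>(UNIV::'n set). f i l * f j l) = G i j"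
    using psd_on_Gram_factorization[OF finite assms] by blast
  show ?thesis
    by (rule that[of "\<lambda>i. \<chi> l. f i l"]) (simp add: inner_vec_def f)
qed

lemma sum_Gram_vectors_eq_0_iff:
  fixes F :: "'i \<Rightarrow> 'a::real_inner"
  assumes "\<And>i j. i \<in> I \<Longrightarrow> j \<in> I \<Longrightarrow> F i \<bullet> F j = G i j"
  shows "(\<Sum>i\<in>I. c i *\<^sub>R F i) = 0 \<longleftrightarrow> quad_form I G c = 0"
  using norm_sum_Gram_vectors[of I F G c] assms by auto

lemma regular_graph_low_rank_Gram_vectors:
  fixes E :: "'n::finite \<Rightarrow> 'n \<Rightarrow> bool"
  assumes irrefl: "\<And>i. \<not> E i i" and sym: "\<And>i j. E i j \<Longrightarrow> E j i"
    and regular: "\<And>i. card {j. E i j} = k"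
    and K2_plus_K1: "E u w" "\<not> E u v" "\<not> E v w" "u \<noteq> v" "v \<noteq> w"
  obtains F :: "'n \<Rightarrow> real^'n" and \<alpha> \<gamma>
  where "\<And>i j. F i \<bullet> F j = graph_kernel E \<alpha> \<gamma> i j"
    and "0 < \<alpha>" and "dim (range F) \<le> CARD('n) - 2"
proof -
  obtain x where x_perp: "x \<bullet> 1 = 0" and "norm x = 1" and \<alpha>_pos: "0 < x \<bullet> (adjacency_matrix E *v x)"
    and bound: "\<And>z. z \<bullet> 1 = 0 \<Longrightarrow> z \<bullet> (adjacency_matrix E *v z) \<le> (x \<bullet> (adjacency_matrix E *v x)) * (norm z)\<^sup>2"
    using adjacency_max_on_ones_orthogonal[OF irrefl sym K2_plus_K1] by blast
  define \<alpha> where "\<alpha> = x \<bullet> (adjacency_matrix E *v x)"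
  define \<gamma> where "\<gamma> = (k - \<alpha>) / CARD('n)"
  define G where "G = graph_kernel E \<alpha> \<gamma>"
  have "psd_on UNIV G"
    unfolding G_def \<gamma>_def using sym regular bound unfolding \<alpha>_def by (rule psd_on_regular_graph_kernel)
  moreover have "symmetric_on UNIV G"
    using sym by (auto simp: symmetric_on_def G_def graph_kernel_def)
  ultimately obtain F :: "'n \<Rightarrow> real^'n" where F: "\<And>i j. F i \<bullet> F j = G i j"
    using exists_Gram_vectors by blast
  have "quad_form UNIV G (($) 1) = 0"
    unfolding G_def quad_form_graph_kernel
    by (simp add: adjacency_matrix_mult_ones[OF regular] \<gamma>_def inner_vec_def power2_eq_square field_simps)
  then have "(\<Sum>i\<in>UNIV. F i) = 0"
    using sum_Gram_vectors_eq_0_iff[of UNIV F G "($) 1"] F by simp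
  moreover have "quad_form UNIV G (($) x) = 0"
    using \<open>norm x = 1\<close> x_perp unfolding G_def quad_form_graph_kernel
    by (simp add: \<alpha>_def power2_norm_eq_inner[symmetric])
  then have "(\<Sum>i\<in>UNIV. x $ i *\<^sub>R F i) = 0"
    using sum_Gram_vectors_eq_0_iff[of UNIV F G "($) x"] F by simp
  moreover obtain a b where "x $ a \<noteq> x $ b"
    using exists_distinct_coordinates[OF x_perp] \<open>norm x = 1\<close> by (metis norm_zero zero_neq_one)
  ultimately have "dim (range F) \<le> CARD('n) - 2"
    by (rule dim_range_le_CARD_minus_2)
  with \<alpha>_pos F show ?thesis
    using that unfolding G_def \<alpha>_def by blast
qed

lemma graph_kernel_Gram_vectors_norm_dist:
  fixes F :: "'n \<Rightarrow> 'a::real_inner"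
  assumes Gram: "\<And>i j. F i \<bullet> F j = graph_kernel E \<alpha> \<gamma> i j"
    and irrefl: "\<And>i. \<not> E i i"
  shows "norm (F i) = sqrt (\<alpha> + \<gamma>)"
    and "i \<noteq> j \<Longrightarrow> dist (F i) (F j) = (if E i j then sqrt (2 * \<alpha> + 2) else sqrt (2 * \<alpha>))"
proof -
  show "norm (F i) = sqrt (\<alpha> + \<gamma>)"
    by (simp add: norm_eq_sqrt_inner Gram graph_kernel_def irrefl)
  assume "i \<noteq> j"
  have "(F i - F j) \<bullet> (F i - F j) = F i \<bullet> F i + F j \<bullet> F j - 2 * (F i \<bullet> F j)"
    by (simp add: inner_diff_left inner_diff_right inner_commute[of "F j" "F i"])
  also have "\<dots> = (if E i j then 2 * \<alpha> + 2 else 2 * \<alpha>)"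
    using \<open>i \<noteq> j\<close> by (simp add: Gram graph_kernel_def irrefl)
  finally show "dist (F i) (F j) = (if E i j then sqrt (2 * \<alpha> + 2) else sqrt (2 * \<alpha>))"
    by (simp add: dist_norm norm_eq_sqrt_inner)
qed

lemma regular_graph_spherical_rep_UNIV:
  fixes E :: "'n::finite \<Rightarrow> 'n \<Rightarrow> bool"
  assumes card: "CARD('n) = CARD('d::finite) + 2"
    and irrefl: "\<And>i. \<not> E i i" and sym: "\<And>i j. E i j \<Longrightarrow> E j i"
    and regular: "\<And>i. card {j. E i j} = k"
    and K2_plus_K1: "E u w" "\<not> E u v" "\<not> E v w" "u \<noteq> v" "v \<noteq> w"
  shows "\<exists>p :: 'n \<Rightarrow> real^'d. spherical_rep UNIV E p"
proof -
  obtain F :: "'n \<Rightarrow> real^'n" and \<alpha> \<gamma>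
    where Gram: "\<And>i j. F i \<bullet> F j = graph_kernel E \<alpha> \<gamma> i j"
      and "0 < \<alpha>" and "dim (range F) \<le> CARD('n) - 2"
    using regular_graph_low_rank_Gram_vectors[OF irrefl sym regular K2_plus_K1] by blast
  have "dim (range F) \<le> DIM(real^'d)"
    using \<open>dim (range F) \<le> CARD('n) - 2\<close> card by simp
  then obtain g :: "real^'n \<Rightarrow> real^'d"
    where "linear g" and g_norm: "\<And>x. x \<in> span (range F) \<Longrightarrow> norm (g x) = norm x"
    using exists_isometry_on_span by blast
  have norm_gF: "norm ((g \<circ> F) i) = sqrt (\<alpha> + \<gamma>)" for i
    using g_norm[of "F i"] graph_kernel_Gram_vectors_norm_dist(1)[OF Gram irrefl]
    by (simp add: span_base)
  have dist_gF: "dist ((g \<circ> F) i) ((g \<circ> F) j) = (if E i j then sqrt (2 * \<alpha> + 2) else sqrt (2 * \<alpha>))"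
    if "i \<noteq> j" for i j
  proof -
    have "dist (g (F i)) (g (F j)) = norm (F i - F j)"
      using g_norm[of "F i - F j"] by (simp add: dist_norm linear_diff[OF \<open>linear g\<close>] span_diff span_base)
    then show ?thesis
      using graph_kernel_Gram_vectors_norm_dist(2)[OF Gram irrefl that] by (simp add: dist_norm)
  qed
  have "spherical_rep UNIV E (g \<circ> F)"
  proof (rule spherical_rep_of_two_distances[where r = "sqrt (\<alpha> + \<gamma>)" and u = u and v = v and w = w])
    show "0 < sqrt (2 * \<alpha>)" "sqrt (2 * \<alpha>) < sqrt (2 * \<alpha> + 2)"
      using \<open>0 < \<alpha>\<close> by simp_all
  qed (use norm_gF dist_gF irrefl K2_plus_K1 in simp_all)
  then show ?thesis by blast
qed

lemma regular_graph_spherical_rep: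
  fixes V :: "'v set" and E :: "'v \<Rightarrow> 'v \<Rightarrow> bool"
  assumes "simple_graph V E" "regular_graph V E" "card V = CARD('d::finite) + 2"
    and "u \<in> V" "v \<in> V" "w \<in> V"
    and K2_plus_K1: "E u w" "\<not> E u v" "\<not> E v w" "u \<noteq> v" "v \<noteq> w"
  shows "\<exists>f :: 'v \<Rightarrow> real^'d. spherical_rep V E f"
proof -
  have "finite V" and irrefl: "\<And>x. \<not> E x x" and sym: "\<And>x y. E x y \<Longrightarrow> E y x"
    using assms(1) by (auto simp: simple_graph_def)
  obtain k where regular: "\<And>x. x \<in> V \<Longrightarrow> degree V E x = k"
    using assms(2) by (auto simp: regular_graph_def)
  have card_option: "CARD('d option option) = CARD('d) + 2"
    by (simp add: card_UNIV_option)
  with assms(3) obtain \<beta> :: "'d option option \<Rightarrow> 'v" where \<beta>: "bij_betw \<beta> UNIV V"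
    using finite_same_card_bij[OF finite \<open>finite V\<close>] by metis
  then obtain u' v' w' where "\<beta> u' = u" "\<beta> v' = v" "\<beta> w' = w"
    using \<open>u \<in> V\<close> \<open>v \<in> V\<close> \<open>w \<in> V\<close> by (metis bij_betw_imp_surj_on imageE)
  define E' where "E' i j = E (\<beta> i) (\<beta> j)" for i j
  have "card {j. E' i j} = k" for i
    using degree_relabel[OF \<beta>, of i E] regular[of "\<beta> i"] \<beta> by (auto simp: degree_def E'_def bij_betwE)
  moreover have "E' u' w'" "\<not> E' u' v'" "\<not> E' v' w'" "u' \<noteq> v'" "v' \<noteq> w'"
    using K2_plus_K1 \<open>\<beta> u' = u\<close> \<open>\<beta> v' = v\<close> \<open>\<beta> w' = w\<close> by (auto simp: E'_def)
  ultimately obtain p :: "'d option option \<Rightarrow> real^'d" where "spherical_rep UNIV E' p"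
    using regular_graph_spherical_rep_UNIV[OF card_option, of E'] irrefl sym unfolding E'_def by blast
  then show ?thesis
    using spherical_rep_relabel[OF \<beta>] unfolding E'_def by blast
qed

theorem corollary6p2:
  fixes V :: "'v set" and E :: "'v \<Rightarrow> 'v \<Rightarrow> bool"
  assumes "simple_graph V E"
    and "regular_graph V E"
    and "card V = CARD('d::finite) + 2"
    and "\<not> complete_multipartite V E"
  shows "\<exists>f :: 'v \<Rightarrow> real ^ 'd. spherical_rep V E f"
proof -
  obtain u v w where "u \<in> V" "v \<in> V" "w \<in> V" "E u w" "\<not> E u v" "\<not> E v w" "u \<noteq> v" "v \<noteq> w"
    using not_complete_multipartite_obtains_K2_plus_K1[OF assms(1,4)] by blast
  then show ?thesis
    by (rule regular_graph_spherical_rep[OF assms(1-3)])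
qed

end
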